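(* Let $M$ be a monoid generated by a finite set $A$, and let $H$ be an $\mathcal{H}$-class of $M$. If the $\mathcal{R}$-class $R$ containing $H$ contains only finitely many $\mathcal{H}$-classes, then the Schützenberger group $\mathcal{G}(H)$ of $H$ is finitely generated and (equipped with a word metric with respect to a finite generating set) is quasi-isometric to the Schützenberger graph $\Gamma(R,A)$.
   Context: Green's relations on a monoid $M$: $x\mathcal{R}y$ iff $xM=yM$; $x\mathcal{L}y$ iff $Mx=My$; $\mathcal{H}=\mathcal{R}\cap\mathcal{L}$. For an $\mathcal{H}$-class $H$, let $\mathrm{Stab}(H)=\{s\in M: sH=H\}$ and $\sigma$ the congruence on it given by $x\,\sigma\,y$ iff $xh=yh$ for all $h\in H$; the (left) Schützenberger group is the group $\mathcal{G}(H)=\mathrm{Stab}(H)/\sigma$. It acts on the $\mathcal{R}$-class $R\supseteq H$ by $(s/\sigma)\cdot r=sr$. Semimetric space: a set with $d:X\times X\to\mathbb{R}^{\ge0}\cup\{\infty\}$, $d(x,y)=0$ iff $x=y$, triangle inequality (not necessarily symmetric). For a directed graph $\Gamma$ with vertex set $V$, edge set $E$, source and target maps $\iota,\tau$, define the semimetric space $\Gamma^*$ with point set $V\cup(E\times(0,1))$: for vertices $x,y$, $d(x,y)$ is the least number of edges in a directed path from $x$ to $y$ ($\infty$ if none); $d((e,\mu),y)=(1-\mu)+d(\tau(e),y)$; $d(x,(e,\mu))=d(x,\iota(e))+\mu$; $d((e,\mu),(f,\nu))=\nu-\mu$ if $e=f$ and $\nu\ge\mu$, and $d(\tau(e),\iota(f))+(1-\mu)+\nu$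 otherwise. The Schützenberger graph $\Gamma(R,A)$ is $\Delta^*$ where $\Delta$ is the directed graph with vertex set $R$ and an edge labelled $a$ from $x$ to $y$ whenever $x,y\in R$, $a\in A$, $xa=y$. A map $f:X\to X'$ of semimetric spaces is a quasi-isometry if there are constants $1\le\lambda<\infty$, $0<\epsilon<\infty$, $0\le\mu<\infty$ with $\frac1\lambda d(x,y)-\epsilon\le d'(f(x),f(y))\le\lambda d(x,y)+\epsilon$ for all $x,y$, and for every $x'\in X'$ some $x\in X$ with $\max(d'(x',f(x)),d'(f(x),x'))\le\mu$. A finitely generated group $G$ is regarded as a semimetric space via $d_S(g,h)=\min\{n:h=gs_1\cdots s_n, s_i\in S\}$ for a finite set $S$ generating $G$ as a monoid. *)

theory Defs
  imports Main "HOL-Library.Extended_Real"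
begin

definition greenR :: "'a::monoid_mult \<Rightarrow> 'a \<Rightarrow> bool" where
  "greenR x y \<longleftrightarrow> range (\<lambda>m. x * m) = range (\<lambda>m. y * m)"

definition greenL :: "'a::monoid_mult \<Rightarrow> 'a \<Rightarrow> bool" where
  "greenL x y \<longleftrightarrow> range (\<lambda>m. m * x) = range (\<lambda>m. m * y)"

definition greenH :: "'a::monoid_mult \<Rightarrow> 'a \<Rightarrow> bool" where
  "greenH x y \<longleftrightarrow> greenR x y \<and> greenL x y"

definition Rclass :: "'a::monoid_mult \<Rightarrow> 'a set" where
  "Rclass x = {y. greenR x y}"

definition Hclass :: "'a::monoid_mult \<Rightarrow> 'a set" where
  "Hclass x = {y. greenH x y}"

definition stab :: "'a::monoid_mult set \<Rightarrow> 'a set" where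
  "stab H = {s. (\<lambda>h. s * h) ` H = H}"

definition sigma_class :: "'a::monoid_mult set \<Rightarrow> 'a \<Rightarrow> 'a set" where
  "sigma_class H s = {t \<in> stab H. \<forall>h\<in>H. t * h = s * h}"

definition schgrp :: "'a::monoid_mult set \<Rightarrow> 'a set set" where
  "schgrp H = sigma_class H ` stab H"

definition sch_mult :: "'a::monoid_mult set \<Rightarrow> 'a set \<Rightarrow> 'a set \<Rightarrow> 'a set" where
  "sch_mult H X Y = sigma_class H ((SOME x. x \<in> X) * (SOME y. y \<in> Y))"

definition sch_one :: "'a::monoid_mult set \<Rightarrow> 'a set" where
  "sch_one H = sigma_class H 1"

definition sch_generates :: "'a::monoid_mult set \<Rightarrow> 'a set set \<Rightarrow> bool" where
  "sch_generates H S \<longleftrightarrow> S \<subseteq> schgrp H \<and>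
     (\<forall>g\<in>schgrp H. \<exists>ss. set ss \<subseteq> S \<and> g = foldl (sch_mult H) (sch_one H) ss)"

definition word_dist :: "'a::monoid_mult set \<Rightarrow> 'a set set \<Rightarrow> 'a set \<Rightarrow> 'a set \<Rightarrow> ereal" where
  "word_dist H S g h = Inf {ereal (real (length ss)) | ss. set ss \<subseteq> S \<and> h = foldl (sch_mult H) g ss}"

datatype ('v, 'e) gpt = GV 'v | GE 'e real

fun walk :: "'e set \<Rightarrow> ('e \<Rightarrow> 'v) \<Rightarrow> ('e \<Rightarrow> 'v) \<Rightarrow> nat \<Rightarrow> 'v \<Rightarrow> 'v \<Rightarrow> bool" where
  "walk E src tgt 0 x y = (x = y)"
| "walk E src tgt (Suc n) x y = (\<exists>e\<in>E. src e = x \<and> walk E src tgt n (tgt e) y)"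

text \<open>Least number of edges in a directed path (infinity if none).\<close>
definition vdist :: "'e set \<Rightarrow> ('e \<Rightarrow> 'v) \<Rightarrow> ('e \<Rightarrow> 'v) \<Rightarrow> 'v \<Rightarrow> 'v \<Rightarrow> ereal" where
  "vdist E src tgt x y = Inf {ereal (real n) | n. walk E src tgt n x y}"

definition gpoints :: "'v set \<Rightarrow> 'e set \<Rightarrow> ('v, 'e) gpt set" where
  "gpoints V E = GV ` V \<union> {GE e \<mu> | e \<mu>. e \<in> E \<and> 0 < \<mu> \<and> \<mu> < 1}"

fun gdist :: "'e set \<Rightarrow> ('e \<Rightarrow> 'v) \<Rightarrow> ('e \<Rightarrow> 'v) \<Rightarrow> ('v, 'e) gpt \<Rightarrow> ('v, 'e) gpt \<Rightarrow> ereal" where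
  "gdist E src tgt (GV x) (GV y) = vdist E src tgt x y"
| "gdist E src tgt (GE e \<mu>) (GV y) = ereal (1 - \<mu>) + vdist E src tgt (tgt e) y"
| "gdist E src tgt (GV x) (GE f \<nu>) = vdist E src tgt x (src f) + ereal \<nu>"
| "gdist E src tgt (GE e \<mu>) (GE f \<nu>) =
     (if e = f \<and> \<mu> \<le> \<nu> then ereal (\<nu> - \<mu>)
      else vdist E src tgt (tgt e) (src f) + ereal (1 - \<mu>) + ereal \<nu>)"

definition sch_edges :: "'a::monoid_mult set \<Rightarrow> 'a set \<Rightarrow> ('a \<times> 'a \<times> 'a) set" where
  "sch_edges A R = {(x, a, y). x \<in> R \<and> y \<in> R \<and> a \<in> A \<and> x * a = y}"

definition edge_tgt :: "'a \<times> 'a \<times> 'a \<Rightarrow> 'a" where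
  "edge_tgt e = snd (snd e)"

definition quasi_isometry ::
  "'x set \<Rightarrow> ('x \<Rightarrow> 'x \<Rightarrow> ereal) \<Rightarrow> 'y set \<Rightarrow> ('y \<Rightarrow> 'y \<Rightarrow> ereal) \<Rightarrow> ('x \<Rightarrow> 'y) \<Rightarrow> bool" where
  "quasi_isometry X d Y d' f \<longleftrightarrow> f ` X \<subseteq> Y \<and>
     (\<exists>lam \<epsilon> \<mu>::real. 1 \<le> lam \<and> 0 < \<epsilon> \<and> 0 \<le> \<mu> \<and>
        (\<forall>x\<in>X. \<forall>y\<in>X. ereal (1 / lam) * d x y - ereal \<epsilon> \<le> d' (f x) (f y)
                        \<and> d' (f x) (f y) \<le> ereal lam * d x y + ereal \<epsilon>) \<and>
        (\<forall>y'\<in>Y. \<exists>x\<in>X. max (d' y' (f x)) (d' (f x) y') \<le> ereal \<mu>))"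

end

theory Submission
  imports Defs
begin

text \<open>The Schuetzenberger group \<open>G\<close> of \<open>H\<close> acts freely on the R-class \<open>R\<close> of \<open>h\<close> by left
  multiplication, and its orbits are the H-classes in \<open>R\<close>. This is the Svarc-Milnor
  situation: with finitely many orbits, the orbit of \<open>h\<close> is coarsely dense in \<open>\<Gamma>(R,A)\<close>.
  Fix a transversal \<open>Q\<close> of the H-classes with \<open>h \<in> Q\<close>. Every edge \<open>q \<rightarrow> q a\<close> with \<open>q \<in> Q\<close>
  ends at the translate of a point of \<open>Q\<close> by one of finitely many group elements, so lifting a
  walk from \<open>X h\<close> to \<open>Y h\<close> edge by edge writes \<open>Y\<close> as \<open>X\<close> times a word of the same length in
  these elements. This gives finite generation and bounds word length by graph distance;
  conversely each generator moves \<open>h\<close> along a path of bounded length.\<close>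

lemma finite_bounded_witness:
  assumes "finite P" and "\<forall>p\<in>P. \<exists>n. Q n p"
  shows "\<exists>M::nat. \<forall>p\<in>P. \<exists>n\<le>M. Q n p"
proof -
  obtain f where f: "\<forall>p\<in>P. Q (f p) p" using assms(2) by metis
  have "\<forall>p\<in>P. f p \<le> Max (f ` P)" using assms(1) by simp
  thus ?thesis using f by blast
qed

lemma length_concat_map_le:
  "(\<forall>z\<in>set zs. length (f z) \<le> K) \<Longrightarrow> length (concat (map f zs)) \<le> K * length zs"
  by (induction zs) auto

lemma Inf_ereal_of_nat_attained:
  fixes g :: "'b \<Rightarrow> nat"
  assumes "P k"
  obtains x where "P x" "Inf {ereal (real (g y)) | y. P y} = ereal (real (g x))"
    "\<And>y. P y \<Longrightarrow> g x \<le> g y"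
proof -
  obtain x where x: "P x" "\<And>y. P y \<Longrightarrow> g x \<le> g y"
    using ex_has_least_nat[of P k g] assms by blast
  have "Inf {ereal (real (g y)) | y. P y} = ereal (real (g x))"
    by (rule cInf_eq_minimum) (use x in auto)
  with x that show ?thesis by blast
qed

lemma greenR_iff: "greenR x y \<longleftrightarrow> (\<exists>a. y = x * a) \<and> (\<exists>b. x = y * b)"
proof
  assume "greenR x y"
  hence e: "range (\<lambda>m. x * m) = range (\<lambda>m. y * m)" by (simp add: greenR_def)
  have "y \<in> range (\<lambda>m. y * m)" "x \<in> range (\<lambda>m. x * m)"
    by (metis mult.right_neutral rangeI)+
  thus "(\<exists>a. y = x * a) \<and> (\<exists>b. x = y * b)" using e by auto
next
  assume "(\<exists>a. y = x * a) \<and> (\<exists>b. x = y * b)"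
  then obtain a b where "y = x * a" "x = y * b" by blast
  thus "greenR x y" unfolding greenR_def
    by (auto simp: mult.assoc[symmetric]) (metis mult.assoc rangeI)+
qed

lemma greenL_iff: "greenL x y \<longleftrightarrow> (\<exists>a. y = a * x) \<and> (\<exists>b. x = b * y)"
proof
  assume "greenL x y"
  hence e: "range (\<lambda>m. m * x) = range (\<lambda>m. m * y)" by (simp add: greenL_def)
  have "y \<in> range (\<lambda>m. m * y)" "x \<in> range (\<lambda>m. m * x)"
    by (metis mult.left_neutral rangeI)+
  thus "(\<exists>a. y = a * x) \<and> (\<exists>b. x = b * y)" using e by auto
next
  assume "(\<exists>a. y = a * x) \<and> (\<exists>b. x = b * y)"
  then obtain a b where "y = a * x" "x = b * y" by blast
  thus "greenL x y" unfolding greenL_def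
    by (auto simp: mult.assoc) (metis mult.assoc rangeI)+
qed

lemma greenR_refl: "greenR x x"
  and greenR_sym: "greenR x y \<Longrightarrow> greenR y x"
  and greenR_trans: "greenR x y \<Longrightarrow> greenR y z \<Longrightarrow> greenR x z"
  by (simp_all add: greenR_def)

lemma greenL_refl: "greenL x x"
  and greenL_sym: "greenL x y \<Longrightarrow> greenL y x"
  and greenL_trans: "greenL x y \<Longrightarrow> greenL y z \<Longrightarrow> greenL x z"
  by (simp_all add: greenL_def)

lemma greenH_sym: "greenH x y \<Longrightarrow> greenH y x"
  and greenH_trans: "greenH x y \<Longrightarrow> greenH y z \<Longrightarrow> greenH x z"
  by (auto simp: greenH_def intro: greenR_sym greenR_trans greenL_sym greenL_trans)

lemma Hclass_self: "x \<in> Hclass x"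
  by (simp add: Hclass_def greenH_def greenR_refl greenL_refl)

section \<open>The Schuetzenberger group acting on the R-class\<close>

text \<open>Elements of the Schuetzenberger group are \<open>\<sigma>\<close>-classes; they act on \<open>R\<close> through the same
  chosen representative that \<open>sch_mult\<close> multiplies.\<close>

definition sch_rep :: "'a set \<Rightarrow> 'a" where
  "sch_rep X = (SOME x. x \<in> X)"

definition sch_act :: "'a::monoid_mult set \<Rightarrow> 'a \<Rightarrow> 'a" where
  "sch_act X x = sch_rep X * x"

locale schutzenberger =
  fixes h :: "'a::monoid_mult"
begin

abbreviation "H \<equiv> Hclass h"
abbreviation "R \<equiv> Rclass h"
abbreviation "G \<equiv> schgrp H"

lemma mem_Rclass_iff: "y \<in> R \<longleftrightarrow> (\<exists>a. y = h * a) \<and> (\<exists>b. h = y * b)"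
  by (simp add: Rclass_def greenR_iff)

lemma mem_Hclass_iff: "y \<in> H \<longleftrightarrow> y \<in> R \<and> greenL h y"
  by (simp add: Hclass_def Rclass_def greenH_def)

lemma Hclass_subset_Rclass: "H \<subseteq> R"
  by (auto simp: mem_Hclass_iff)

lemma h_in_Hclass: "h \<in> H"
  by (rule Hclass_self)

lemma h_in_Rclass: "h \<in> R"
  using h_in_Hclass Hclass_subset_Rclass by blast

lemma stab_mult_Hclass: "s \<in> stab H \<Longrightarrow> x \<in> H \<Longrightarrow> s * x \<in> H"
  by (auto simp: stab_def)

lemma one_in_stab: "1 \<in> stab H"
  by (simp add: stab_def)

lemma stab_mult_closed: "s \<in> stab H \<Longrightarrow> t \<in> stab H \<Longrightarrow> s * t \<in> stab H"
proof -
  assume "s \<in> stab H" "t \<in> stab H"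
  moreover have "(\<lambda>x. s * t * x) ` H = (\<lambda>x. s * x) ` ((\<lambda>x. t * x) ` H)"
    by (auto simp: image_image mult.assoc)
  ultimately show ?thesis by (simp add: stab_def)
qed

lemma stab_mult_Rclass: "s \<in> stab H \<Longrightarrow> x \<in> R \<Longrightarrow> s * x \<in> R"
proof -
  assume s: "s \<in> stab H" and x: "x \<in> R"
  then obtain m p where m: "x = h * m" and p: "h = x * p" by (auto simp: mem_Rclass_iff)
  have "s * h \<in> R" using stab_mult_Hclass[OF s h_in_Hclass] by (simp add: mem_Hclass_iff)
  then obtain a b where a: "s * h = h * a" and b: "h = s * h * b" by (auto simp: mem_Rclass_iff)
  have "s * x = h * (a * m)" using m a by (simp add: mult.assoc[symmetric])
  moreover have "h = s * x * (p * b)" using b p by (simp add: mult.assoc)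
  ultimately show ?thesis unfolding mem_Rclass_iff by blast
qed

lemma sigma_class_eq_on_Rclass: "t \<in> sigma_class H s \<Longrightarrow> x \<in> R \<Longrightarrow> t * x = s * x"
proof -
  assume t: "t \<in> sigma_class H s" and "x \<in> R"
  then obtain m where "x = h * m" by (auto simp: mem_Rclass_iff)
  moreover have "t * h = s * h" using t h_in_Hclass by (auto simp: sigma_class_def)
  ultimately show ?thesis by (metis mult.assoc)
qed

lemma sch_rep_sigma_class: "s \<in> stab H \<Longrightarrow> sch_rep (sigma_class H s) \<in> sigma_class H s"
  unfolding sch_rep_def by (rule someI[of _ s]) (simp add: sigma_class_def)

lemma sch_act_sigma_class: "s \<in> stab H \<Longrightarrow> x \<in> R \<Longrightarrow> sch_act (sigma_class H s) x = s * x"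
  unfolding sch_act_def using sch_rep_sigma_class sigma_class_eq_on_Rclass by blast

lemma sigma_class_in_schgrp: "s \<in> stab H \<Longrightarrow> sigma_class H s \<in> G"
  by (simp add: schgrp_def)

lemma schgrp_sch_rep: "X \<in> G \<Longrightarrow> sch_rep X \<in> stab H \<and> X = sigma_class H (sch_rep X)"
proof -
  assume "X \<in> G"
  then obtain s where s: "s \<in> stab H" and X: "X = sigma_class H s" by (auto simp: schgrp_def)
  have r: "sch_rep X \<in> X" using sch_rep_sigma_class[OF s] X by simp
  hence "sigma_class H (sch_rep X) = sigma_class H s" using X by (auto simp: sigma_class_def)
  thus ?thesis using r X by (simp add: sigma_class_def)
qed

lemma sch_rep_in_stab: "X \<in> G \<Longrightarrow> sch_rep X \<in> stab H"
  using schgrp_sch_rep by blast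

lemma sch_act_Rclass: "X \<in> G \<Longrightarrow> x \<in> R \<Longrightarrow> sch_act X x \<in> R"
  by (simp add: sch_act_def sch_rep_in_stab stab_mult_Rclass)

lemma sch_act_Hclass: "X \<in> G \<Longrightarrow> x \<in> H \<Longrightarrow> sch_act X x \<in> H"
  by (simp add: sch_act_def sch_rep_in_stab stab_mult_Hclass)

lemma sch_mult_closed: "X \<in> G \<Longrightarrow> Y \<in> G \<Longrightarrow> sch_mult H X Y \<in> G"
  unfolding sch_mult_def sch_rep_def[symmetric]
  by (intro sigma_class_in_schgrp stab_mult_closed sch_rep_in_stab)

lemma sch_act_mult:
  "X \<in> G \<Longrightarrow> Y \<in> G \<Longrightarrow> x \<in> R \<Longrightarrow> sch_act (sch_mult H X Y) x = sch_act X (sch_act Y x)"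
  unfolding sch_mult_def sch_rep_def[symmetric]
  by (subst sch_act_sigma_class) (auto simp: sch_rep_in_stab stab_mult_closed sch_act_def mult.assoc)

lemma sch_one_closed: "sch_one H \<in> G"
  unfolding sch_one_def by (rule sigma_class_in_schgrp[OF one_in_stab])

lemma sch_act_one: "x \<in> R \<Longrightarrow> sch_act (sch_one H) x = x"
  unfolding sch_one_def by (simp add: sch_act_sigma_class one_in_stab)

lemma sch_act_inj: "X \<in> G \<Longrightarrow> Y \<in> G \<Longrightarrow> sch_act X h = sch_act Y h \<Longrightarrow> X = Y"
proof -
  assume X: "X \<in> G" and Y: "Y \<in> G" and e: "sch_act X h = sch_act Y h"
  have "\<forall>x\<in>H. sch_rep X * x = sch_rep Y * x"
  proof
    fix x assume "x \<in> H"
    then obtain m where "x = h * m" by (auto simp: mem_Hclass_iff mem_Rclass_iff)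
    thus "sch_rep X * x = sch_rep Y * x" using e by (metis sch_act_def mult.assoc)
  qed
  hence "sigma_class H (sch_rep X) = sigma_class H (sch_rep Y)" by (auto simp: sigma_class_def)
  thus ?thesis using schgrp_sch_rep[OF X] schgrp_sch_rep[OF Y] by simp
qed

lemma left_translation_Hclass:
  assumes x: "x \<in> H" and y: "y \<in> H" and u: "y = u * x" and w: "x = w * y" and z: "z \<in> H"
  shows "u * z \<in> H \<and> w * (u * z) = z"
proof -
  have "greenR x z" using x z by (auto simp: Hclass_def greenH_def intro: greenR_sym greenR_trans)
  then obtain m p where m: "z = x * m" and p: "x = z * p" by (auto simp: greenR_iff)
  have uz: "u * z = y * m" using u m by (simp add: mult.assoc)
  have wuz: "w * (u * z) = z" using uz w m by (simp add: mult.assoc)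
  have "y = u * z * p" using u p by (simp add: mult.assoc)
  hence "greenR y (u * z)" using uz by (auto simp: greenR_iff)
  hence "greenR h (u * z)" using y by (auto simp: Hclass_def greenH_def intro: greenR_trans)
  moreover have "greenL z (u * z)" unfolding greenL_iff using wuz by metis
  hence "greenL h (u * z)" using z by (auto simp: Hclass_def greenH_def intro: greenL_trans)
  ultimately show ?thesis using wuz by (simp add: Hclass_def greenH_def)
qed

lemma stab_transitive_on_Hclass: "x \<in> H \<Longrightarrow> y \<in> H \<Longrightarrow> \<exists>s\<in>stab H. s * x = y"
proof -
  assume x: "x \<in> H" and y: "y \<in> H"
  have "greenL x y" using x y by (auto simp: Hclass_def greenH_def intro: greenL_sym greenL_trans)
  then obtain u w where u: "y = u * x" and w: "x = w * y" by (auto simp: greenL_iff)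
  have "(\<lambda>z. u * z) ` H = H"
  proof
    show "(\<lambda>z. u * z) ` H \<subseteq> H" using left_translation_Hclass[OF x y u w] by auto
    show "H \<subseteq> (\<lambda>z. u * z) ` H"
    proof
      fix z assume "z \<in> H"
      from left_translation_Hclass[OF y x w u this] show "z \<in> (\<lambda>z. u * z) ` H"
        by (metis image_eqI)
    qed
  qed
  thus ?thesis using u by (auto simp: stab_def)
qed

lemma sch_inverse: "X \<in> G \<Longrightarrow> \<exists>X'\<in>G. \<forall>x\<in>R. sch_act X' (sch_act X x) = x"
proof -
  assume X: "X \<in> G"
  obtain s where s: "s \<in> stab H" and e: "s * sch_act X h = h"
    using stab_transitive_on_Hclass[OF sch_act_Hclass[OF X h_in_Hclass] h_in_Hclass] by blast
  have "sch_act (sigma_class H s) (sch_act X x) = x" if "x \<in> R" for x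
  proof -
    obtain m where m: "x = h * m" using \<open>x \<in> R\<close> by (auto simp: mem_Rclass_iff)
    have "sch_act (sigma_class H s) (sch_act X x) = s * sch_act X h * m"
      using sch_act_sigma_class[OF s sch_act_Rclass[OF X that]] m by (simp add: sch_act_def mult.assoc)
    thus ?thesis using e m by simp
  qed
  thus ?thesis using sigma_class_in_schgrp[OF s] by blast
qed

lemma sch_act_greenH: "X \<in> G \<Longrightarrow> x \<in> R \<Longrightarrow> greenH x (sch_act X x)"
proof -
  assume X: "X \<in> G" and x: "x \<in> R"
  obtain X' where "X' \<in> G" "sch_act X' (sch_act X x) = x" using sch_inverse[OF X] x by blast
  hence "greenL x (sch_act X x)" unfolding greenL_iff sch_act_def by metis
  moreover have "greenR x (sch_act X x)"
    using x sch_act_Rclass[OF X x] by (auto simp: Rclass_def intro: greenR_sym greenR_trans)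
  ultimately show ?thesis by (simp add: greenH_def)
qed

lemma sch_orbit_greenH: "v \<in> R \<Longrightarrow> greenH v q \<Longrightarrow> \<exists>X\<in>G. v = sch_act X q"
proof -
  assume v: "v \<in> R" and vq: "greenH v q"
  have q: "greenR h q" using v vq by (auto simp: Rclass_def greenH_def intro: greenR_trans)
  then obtain m n where m: "q = h * m" and n: "h = q * n" by (auto simp: greenR_iff)
  obtain u w where u: "v = u * q" and w: "q = w * v" using vq by (auto simp: greenH_def greenL_iff)
  obtain b p where b: "v = h * b" and p: "h = v * p" using v by (auto simp: mem_Rclass_iff)
  \<comment> \<open>\<open>h' = v n\<close> lies in \<open>H\<close> and maps onto \<open>v\<close> in the same way as \<open>h\<close> maps onto \<open>q\<close>.\<close>
  define h' where "h' = v * n"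
  have h'm: "h' * m = v"
  proof -
    have "h' * m = u * (q * n) * m" by (simp add: h'_def u mult.assoc)
    also have "\<dots> = v" by (simp only: n[symmetric] mult.assoc m[symmetric] u[symmetric])
    finally show ?thesis .
  qed
  have "h' = h * (b * n)" "h = h' * (m * p)"
    using b h'm p by (simp_all add: h'_def mult.assoc[symmetric])
  moreover have "h' = u * h" using u n by (simp add: h'_def mult.assoc)
  moreover have "h = w * h'" using w n by (simp add: h'_def mult.assoc)
  ultimately have "h' \<in> H" unfolding Hclass_def greenH_def greenR_iff greenL_iff by blast
  then obtain s where s: "s \<in> stab H" and e: "s * h = h'"
    using stab_transitive_on_Hclass[OF h_in_Hclass] by blast
  have "sch_act (sigma_class H s) q = s * h * m"
    using sch_act_sigma_class[OF s] q by (simp add: Rclass_def m mult.assoc)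
  thus ?thesis using sigma_class_in_schgrp[OF s] e h'm by metis
qed

lemma sch_act_mult_Rclass: "X \<in> G \<Longrightarrow> q \<in> R \<Longrightarrow> sch_act X q * a \<in> R \<Longrightarrow> q * a \<in> R"
proof -
  assume X: "X \<in> G" and q: "q \<in> R" and qa: "sch_act X q * a \<in> R"
  obtain X' where X': "X' \<in> G" "sch_act X' (sch_act X q) = q" using sch_inverse[OF X] q by blast
  hence "q * a = sch_rep X' * (sch_act X q * a)" by (metis sch_act_def mult.assoc)
  thus ?thesis using stab_mult_Rclass[OF sch_rep_in_stab[OF X'(1)] qa] by simp
qed

lemma foldl_sch_mult_closed: "X \<in> G \<Longrightarrow> set zs \<subseteq> G \<Longrightarrow> foldl (sch_mult H) X zs \<in> G"
  by (induction zs arbitrary: X) (auto simp: sch_mult_closed)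

lemma sch_act_foldl:
  "X \<in> G \<Longrightarrow> set zs \<subseteq> G \<Longrightarrow> x \<in> R \<Longrightarrow>
   sch_act (foldl (sch_mult H) X zs) x = sch_act X (sch_act (foldl (sch_mult H) (sch_one H) zs) x)"
proof (induction zs arbitrary: X)
  case Nil thus ?case by (simp add: sch_act_one)
next
  case (Cons z zs)
  let ?y = "sch_act (foldl (sch_mult H) (sch_one H) zs) x"
  have z: "z \<in> G" and zs: "set zs \<subseteq> G" using Cons.prems by auto
  have y: "?y \<in> R" using sch_act_Rclass[OF foldl_sch_mult_closed[OF sch_one_closed zs] Cons.prems(3)] .
  have "sch_act (foldl (sch_mult H) X (z # zs)) x = sch_act X (sch_act z ?y)"
    using Cons.IH[OF sch_mult_closed[OF Cons.prems(1) z] zs Cons.prems(3)]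
      sch_act_mult[OF Cons.prems(1) z y] by simp
  moreover have "sch_act (foldl (sch_mult H) (sch_one H) (z # zs)) x = sch_act z ?y"
    using Cons.IH[OF sch_mult_closed[OF sch_one_closed z] zs Cons.prems(3)]
      sch_act_mult[OF sch_one_closed z y] sch_act_one[OF sch_act_Rclass[OF z y]] by simp
  ultimately show ?case by simp
qed

lemma sch_mult_foldl:
  assumes X: "X \<in> G" and zs: "set zs \<subseteq> G"
  shows "sch_mult H X (foldl (sch_mult H) (sch_one H) zs) = foldl (sch_mult H) X zs"
proof -
  have Z: "foldl (sch_mult H) (sch_one H) zs \<in> G" using foldl_sch_mult_closed[OF sch_one_closed zs] .
  show ?thesis
    using sch_act_inj[OF sch_mult_closed[OF X Z] foldl_sch_mult_closed[OF X zs]]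
      sch_act_mult[OF X Z h_in_Rclass] sch_act_foldl[OF X zs h_in_Rclass] by simp
qed

lemma foldl_concat_words:
  assumes "X \<in> G"
    and "\<forall>z\<in>set zs. set (w z) \<subseteq> G \<and> z = foldl (sch_mult H) (sch_one H) (w z)"
  shows "foldl (sch_mult H) X zs = foldl (sch_mult H) X (concat (map w zs))"
  using assms
proof (induction zs arbitrary: X)
  case Nil thus ?case by simp
next
  case (Cons z zs)
  have wz: "set (w z) \<subseteq> G" and z: "z = foldl (sch_mult H) (sch_one H) (w z)"
    using Cons.prems(2) by auto
  have "sch_mult H X z = foldl (sch_mult H) X (w z)"
    using sch_mult_foldl[OF Cons.prems(1) wz] by (simp only: z[symmetric])
  moreover have "foldl (sch_mult H) X (w z) \<in> G"
    using foldl_sch_mult_closed[OF Cons.prems(1)] Cons.prems(2) by simp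
  ultimately show ?case using Cons.IH Cons.prems(2) by simp
qed

end

section \<open>Walks in the Schuetzenberger graph\<close>

locale schutzenberger_graph = schutzenberger +
  fixes A :: "'a set"
  assumes generated: "\<forall>m. \<exists>ws. set ws \<subseteq> A \<and> m = prod_list ws"
begin

abbreviation "E \<equiv> sch_edges A R"
abbreviation "walkR \<equiv> walk E fst edge_tgt"
abbreviation "vdistR \<equiv> vdist E fst edge_tgt"

lemma walk_Suc_iff: "walkR (Suc n) x y \<longleftrightarrow> (\<exists>a\<in>A. x \<in> R \<and> x * a \<in> R \<and> walkR n (x * a) y)"
  by (force simp: sch_edges_def edge_tgt_def)

declare walk.simps(2)[simp del]

lemma walk_append: "walkR n x y \<Longrightarrow> walkR m y z \<Longrightarrow> walkR (n + m) x z"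
  by (induction n arbitrary: x) (auto simp: walk_Suc_iff)

lemma walk_prod_list:
  "x \<in> R \<Longrightarrow> set ws \<subseteq> A \<Longrightarrow> x * prod_list ws \<in> R \<Longrightarrow> walkR (length ws) x (x * prod_list ws)"
proof (induction ws arbitrary: x)
  case Nil thus ?case by simp
next
  case (Cons a ws)
  from Cons.prems(1) obtain c where c: "x = h * c" by (auto simp: mem_Rclass_iff)
  from Cons.prems(3) obtain d where d: "h = x * (a * prod_list ws) * d" by (auto simp: mem_Rclass_iff)
  have "x * a = h * (c * a)" using c by (simp add: mult.assoc)
  moreover have "h = x * a * (prod_list ws * d)" using d by (simp add: mult.assoc)
  ultimately
  have xa: "x * a \<in> R" unfolding mem_Rclass_iff by blast
  have "walkR (length ws) (x * a) (x * a * prod_list ws)"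
    using Cons.IH[OF xa] Cons.prems by (simp add: mult.assoc)
  thus ?case using xa Cons.prems by (auto simp: walk_Suc_iff mult.assoc)
qed

lemma walk_exists: "x \<in> R \<Longrightarrow> y \<in> R \<Longrightarrow> \<exists>n. walkR n x y"
proof -
  assume x: "x \<in> R" and y: "y \<in> R"
  obtain a b where a: "y = h * a" and b: "h = x * b" using x y by (auto simp: mem_Rclass_iff)
  obtain ws where ws: "set ws \<subseteq> A" "b * a = prod_list ws" using generated by blast
  have "y = x * prod_list ws" using a b ws by (simp add: mult.assoc)
  thus ?thesis using walk_prod_list[OF x ws(1)] y by metis
qed

lemma walk_sch_act: "X \<in> G \<Longrightarrow> walkR n x y \<Longrightarrow> walkR n (sch_act X x) (sch_act X y)"
proof (induction n arbitrary: x)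
  case 0 thus ?case by simp
next
  case (Suc n)
  then obtain a where a: "a \<in> A" "x \<in> R" "x * a \<in> R" "walkR n (x * a) y"
    by (auto simp: walk_Suc_iff)
  have "sch_act X (x * a) = sch_act X x * a" by (simp add: sch_act_def mult.assoc)
  moreover have "sch_act X x \<in> R" "sch_act X (x * a) \<in> R"
    using a sch_act_Rclass[OF Suc.prems(1)] by auto
  ultimately show ?case using Suc.IH[OF Suc.prems(1) a(4)] a(1) by (auto simp: walk_Suc_iff)
qed

lemma vdist_le_walk: "walkR n x y \<Longrightarrow> vdistR x y \<le> ereal (real n)"
  unfolding vdist_def by (rule Inf_lower) blast

lemma walk_sch_mult:
  assumes X: "X \<in> G" and Y: "Y \<in> G" and ws: "set ws \<subseteq> A" "sch_act Y h = h * prod_list ws"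
  shows "walkR (length ws) (sch_act X h) (sch_act (sch_mult H X Y) h)"
proof -
  have "sch_act (sch_mult H X Y) h = sch_act X h * prod_list ws"
    using sch_act_mult[OF X Y h_in_Rclass] ws(2) by (simp add: sch_act_def mult.assoc)
  thus ?thesis
    using walk_prod_list[OF sch_act_Rclass[OF X h_in_Rclass] ws(1)]
      sch_act_Rclass[OF sch_mult_closed[OF X Y] h_in_Rclass] by simp
qed

end

section \<open>Finite generation\<close>

locale finitely_many_Hclasses = schutzenberger_graph +
  assumes finite_A: "finite A" and finite_Hclasses_in_R: "finite (Hclass ` R)"
begin

definition Hrep :: "'a set \<Rightarrow> 'a" where
  "Hrep C = (if h \<in> C then h else SOME q. q \<in> C)"

definition Q :: "'a set" where
  "Q = Hrep ` Hclass ` R"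

lemma finite_Q: "finite Q"
  unfolding Q_def using finite_Hclasses_in_R by simp

lemma Hrep_Hclass: "Hrep (Hclass v) \<in> Hclass v"
  unfolding Hrep_def using Hclass_self[of v] by (auto intro: someI)

lemma h_in_Q: "h \<in> Q"
  unfolding Q_def Hrep_def using h_in_Rclass Hclass_self by force

lemma Q_subset_Rclass: "Q \<subseteq> R"
proof
  fix q assume "q \<in> Q"
  then obtain v where "v \<in> R" "q \<in> Hclass v" unfolding Q_def using Hrep_Hclass by blast
  thus "q \<in> R" by (auto simp: Rclass_def Hclass_def greenH_def intro: greenR_trans)
qed

lemma Q_Hclass_eq: "q \<in> Q \<Longrightarrow> q \<in> H \<Longrightarrow> q = h"
proof -
  assume "q \<in> Q" and qH: "q \<in> H"
  then obtain v where q: "q = Hrep (Hclass v)" unfolding Q_def by blast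
  have "q \<in> Hclass v" using Hrep_Hclass q by simp
  hence "greenH v h" using qH by (simp add: Hclass_def) (meson greenH_sym greenH_trans)
  thus ?thesis unfolding q Hrep_def by (simp add: Hclass_def)
qed

lemma Q_covers_Rclass: "v \<in> R \<Longrightarrow> \<exists>q\<in>Q. \<exists>X\<in>G. v = sch_act X q"
  using sch_orbit_greenH Hrep_Hclass unfolding Q_def Hclass_def by blast

definition step_gen :: "'a \<Rightarrow> 'a \<Rightarrow> 'a set" where
  "step_gen q a = (SOME Z. Z \<in> G \<and> (\<exists>q'\<in>Q. q * a = sch_act Z q'))"

definition Zs :: "'a set set" where
  "Zs = {step_gen q a | q a. q \<in> Q \<and> a \<in> A \<and> q * a \<in> R}"

lemma step_gen: "q * a \<in> R \<Longrightarrow> step_gen q a \<in> G \<and> (\<exists>q'\<in>Q. q * a = sch_act (step_gen q a) q')"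
  unfolding step_gen_def by (rule someI_ex) (use Q_covers_Rclass in blast)

lemma finite_Zs: "finite Zs"
proof -
  have "Zs \<subseteq> (\<lambda>(q, a). step_gen q a) ` (Q \<times> A)" unfolding Zs_def by auto
  thus ?thesis using finite_Q finite_A finite_subset by blast
qed

lemma Zs_subset: "Zs \<subseteq> G"
  unfolding Zs_def using step_gen by blast

lemma walk_lift:
  "walkR n v w \<Longrightarrow> X \<in> G \<Longrightarrow> q \<in> Q \<Longrightarrow> v = sch_act X q \<Longrightarrow>
   \<exists>zs q'. set zs \<subseteq> Zs \<and> length zs = n \<and> q' \<in> Q \<and> w = sch_act (foldl (sch_mult H) X zs) q'"
proof (induction n arbitrary: v X q)
  case 0 thus ?case by (intro exI[of _ "[]"] exI[of _ q]) simp
next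
  case (Suc n)
  obtain a where a: "a \<in> A" "v * a \<in> R" "walkR n (v * a) w"
    using Suc.prems(1) unfolding walk_Suc_iff by blast
  have "q * a \<in> R"
    using sch_act_mult_Rclass[OF Suc.prems(2)] Suc.prems(3,4) a(2) Q_subset_Rclass by blast
  then obtain q'' where Z: "step_gen q a \<in> G" "q'' \<in> Q" "q * a = sch_act (step_gen q a) q''"
    using step_gen by blast
  have "step_gen q a \<in> Zs" unfolding Zs_def using Suc.prems(3) a(1) \<open>q * a \<in> R\<close> by blast
  have "v * a = sch_act X (q * a)" using Suc.prems(4) by (simp add: sch_act_def mult.assoc)
  also have "\<dots> = sch_act (sch_mult H X (step_gen q a)) q''"
    using Z sch_act_mult[OF Suc.prems(2) Z(1)] Q_subset_Rclass by auto
  finally obtain zs q' where "set zs \<subseteq> Zs" "length zs = n" "q' \<in> Q"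
      "w = sch_act (foldl (sch_mult H) (sch_mult H X (step_gen q a)) zs) q'"
    using Suc.IH[OF a(3) sch_mult_closed[OF Suc.prems(2) Z(1)] Z(2)] by blast
  thus ?case using \<open>step_gen q a \<in> Zs\<close> by (intro exI[of _ "step_gen q a # zs"] exI[of _ q']) auto
qed

text \<open>The lift of a walk between orbit points of \<open>h\<close> ends at the representative \<open>h\<close> itself,
  since the action preserves \<open>H\<close>-classes.\<close>

lemma walk_gives_word:
  assumes X: "X \<in> G" and Y: "Y \<in> G" and w: "walkR n (sch_act X h) (sch_act Y h)"
  shows "\<exists>zs. set zs \<subseteq> Zs \<and> length zs = n \<and> Y = foldl (sch_mult H) X zs"
proof -
  obtain zs q where zs: "set zs \<subseteq> Zs" "length zs = n" "q \<in> Q"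
      and Yh: "sch_act Y h = sch_act (foldl (sch_mult H) X zs) q"
    using walk_lift[OF w X h_in_Q refl] by blast
  have X': "foldl (sch_mult H) X zs \<in> G"
    using foldl_sch_mult_closed[OF X] zs(1) Zs_subset by blast
  have "greenH q (sch_act Y h)"
    using sch_act_greenH[OF X'] zs(3) Q_subset_Rclass Yh by auto
  moreover have "sch_act Y h \<in> H" using sch_act_Hclass[OF Y h_in_Hclass] .
  ultimately have "q \<in> H" by (auto simp: Hclass_def intro: greenH_sym greenH_trans)
  hence "q = h" using Q_Hclass_eq zs(3) by blast
  thus ?thesis using sch_act_inj[OF Y X'] Yh zs(1,2) by blast
qed

lemma sch_generates_Zs: "sch_generates H Zs"
  unfolding sch_generates_def
proof (intro conjI ballI)
  show "Zs \<subseteq> G" by (rule Zs_subset)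
  fix g assume g: "g \<in> G"
  obtain n where "walkR n h (sch_act g h)"
    using walk_exists[OF h_in_Rclass sch_act_Rclass[OF g h_in_Rclass]] by blast
  hence "walkR n (sch_act (sch_one H) h) (sch_act g h)" using sch_act_one[OF h_in_Rclass] by simp
  thus "\<exists>ss. set ss \<subseteq> Zs \<and> g = foldl (sch_mult H) (sch_one H) ss"
    using walk_gives_word[OF sch_one_closed g] by blast
qed

end

section \<open>The orbit map is a quasi-isometry\<close>

locale word_metric = finitely_many_Hclasses +
  fixes S :: "'a set set"
  assumes finite_S: "finite S" and S_generates: "sch_generates H S"
begin

lemma S_subset: "S \<subseteq> G"
  using S_generates by (simp add: sch_generates_def)

lemma word_length_le_walk:
  "\<exists>K. \<forall>X\<in>G. \<forall>Y\<in>G. \<forall>n. walkR n (sch_act X h) (sch_act Y h) \<longrightarrow>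
      (\<exists>ss. set ss \<subseteq> S \<and> length ss \<le> K * n \<and> Y = foldl (sch_mult H) X ss)"
proof -
  have "\<forall>z\<in>Zs. \<exists>ss. set ss \<subseteq> S \<and> z = foldl (sch_mult H) (sch_one H) ss"
    using S_generates Zs_subset unfolding sch_generates_def by blast
  then obtain w where w: "\<forall>z\<in>Zs. set (w z) \<subseteq> S \<and> z = foldl (sch_mult H) (sch_one H) (w z)"
    by (metis bchoice)
  define K where "K = Max (length ` w ` Zs)"
  have K: "\<forall>z\<in>Zs. length (w z) \<le> K" unfolding K_def using finite_Zs by simp
  have "\<exists>ss. set ss \<subseteq> S \<and> length ss \<le> K * n \<and> Y = foldl (sch_mult H) X ss"
    if X: "X \<in> G" and Y: "Y \<in> G" and walk: "walkR n (sch_act X h) (sch_act Y h)" for X Y n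
  proof -
    obtain zs where zs: "set zs \<subseteq> Zs" "length zs = n" "Y = foldl (sch_mult H) X zs"
      using walk_gives_word[OF X Y walk] by blast
    have "\<forall>z\<in>set zs. set (w z) \<subseteq> G \<and> z = foldl (sch_mult H) (sch_one H) (w z)"
      using w zs(1) S_subset by blast
    hence "Y = foldl (sch_mult H) X (concat (map w zs))"
      using foldl_concat_words[OF X] zs(3) by simp
    moreover have "length (concat (map w zs)) \<le> K * n"
      using length_concat_map_le[of zs w K] K zs(1,2) by auto
    moreover have "set (concat (map w zs)) \<subseteq> S" using w zs(1) by auto
    ultimately show ?thesis by blast
  qed
  thus ?thesis by blast
qed

lemma walk_length_le_word:
  "\<exists>C. \<forall>X\<in>G. \<forall>ss. set ss \<subseteq> S \<longrightarrow>
      (\<exists>m\<le>C * length ss. walkR m (sch_act X h) (sch_act (foldl (sch_mult H) X ss) h))"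
proof -
  have "\<forall>s\<in>S. \<exists>ws. set ws \<subseteq> A \<and> sch_act s h = h * prod_list ws"
  proof
    fix s assume "s \<in> S"
    hence "sch_act s h \<in> R"
      using sch_act_Rclass S_subset h_in_Rclass by blast
    then obtain m where "sch_act s h = h * m" by (auto simp: mem_Rclass_iff)
    thus "\<exists>ws. set ws \<subseteq> A \<and> sch_act s h = h * prod_list ws" using generated by metis
  qed
  then obtain v where v: "\<forall>s\<in>S. set (v s) \<subseteq> A \<and> sch_act s h = h * prod_list (v s)"
    by (metis bchoice)
  define C where "C = Max (length ` v ` S)"
  have C: "\<forall>s\<in>S. length (v s) \<le> C" unfolding C_def using finite_S by simp
  have "\<exists>m\<le>C * length ss. walkR m (sch_act X h) (sch_act (foldl (sch_mult H) X ss) h)"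
    if "X \<in> G" "set ss \<subseteq> S" for X ss
    using that
  proof (induction ss arbitrary: X)
    case Nil thus ?case by (intro exI[of _ 0]) simp
  next
    case (Cons s ss)
    have s: "s \<in> G" using Cons.prems S_subset by auto
    have Xs: "sch_mult H X s \<in> G" using sch_mult_closed[OF Cons.prems(1) s] .
    have first: "walkR (length (v s)) (sch_act X h) (sch_act (sch_mult H X s) h)"
      using walk_sch_mult[OF Cons.prems(1) s] v Cons.prems(2) by simp
    obtain m where m: "m \<le> C * length ss"
        "walkR m (sch_act (sch_mult H X s) h) (sch_act (foldl (sch_mult H) (sch_mult H X s) ss) h)"
      using Cons.IH[OF Xs] Cons.prems(2) by auto
    have "length (v s) \<le> C" using C Cons.prems(2) by simp
    hence "length (v s) + m \<le> C * length (s # ss)" using m(1) by simp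
    thus ?case using walk_append[OF first m(2)] by auto
  qed
  thus ?thesis by blast
qed

lemma dist_comparison:
  "\<exists>K C. \<forall>X\<in>G. \<forall>Y\<in>G. \<exists>N n. word_dist H S X Y = ereal (real N) \<and>
      vdistR (sch_act X h) (sch_act Y h) = ereal (real n) \<and> N \<le> K * n \<and> n \<le> C * N"
proof -
  obtain K where K: "\<forall>X\<in>G. \<forall>Y\<in>G. \<forall>n. walkR n (sch_act X h) (sch_act Y h) \<longrightarrow>
      (\<exists>ss. set ss \<subseteq> S \<and> length ss \<le> K * n \<and> Y = foldl (sch_mult H) X ss)"
    using word_length_le_walk by blast
  obtain C where C: "\<forall>X\<in>G. \<forall>ss. set ss \<subseteq> S \<longrightarrow>
      (\<exists>m\<le>C * length ss. walkR m (sch_act X h) (sch_act (foldl (sch_mult H) X ss) h))"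
    using walk_length_le_word by blast
  have "\<exists>N n. word_dist H S X Y = ereal (real N) \<and>
      vdistR (sch_act X h) (sch_act Y h) = ereal (real n) \<and> N \<le> K * n \<and> n \<le> C * N"
    if X: "X \<in> G" and Y: "Y \<in> G" for X Y
  proof -
    let ?walk = "\<lambda>n. walkR n (sch_act X h) (sch_act Y h)"
    let ?word = "\<lambda>ss. set ss \<subseteq> S \<and> Y = foldl (sch_mult H) X ss"
    obtain k where "?walk k"
      using walk_exists sch_act_Rclass X Y h_in_Rclass by blast
    then obtain n where n: "?walk n" "vdistR (sch_act X h) (sch_act Y h) = ereal (real n)"
        "\<And>m. ?walk m \<Longrightarrow> n \<le> m"
      using Inf_ereal_of_nat_attained[of ?walk k "\<lambda>n. n"] unfolding vdist_def by auto
    obtain ss where ss: "?word ss" "length ss \<le> K * n" using K X Y n(1) by blast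
    then obtain N where N: "?word N" "word_dist H S X Y = ereal (real (length N))"
        "\<And>t. ?word t \<Longrightarrow> length N \<le> length t"
      using Inf_ereal_of_nat_attained[of ?word ss length] unfolding word_dist_def by blast
    obtain m where "m \<le> C * length N" "?walk m" using C X N(1) by metis
    hence "n \<le> C * length N" using n(3) by fastforce
    moreover have "length N \<le> K * n" using N(3) ss by fastforce
    ultimately show ?thesis using n(2) N(2) by blast
  qed
  thus ?thesis by blast
qed

lemma orbit_map_quasi_isometric:
  "\<exists>lam\<ge>1. \<forall>X\<in>G. \<forall>Y\<in>G.
     ereal (1 / lam) * word_dist H S X Y - ereal 1 \<le> vdistR (sch_act X h) (sch_act Y h) \<and>
     vdistR (sch_act X h) (sch_act Y h) \<le> ereal lam * word_dist H S X Y + ereal 1"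
proof -
  obtain K C where KC: "\<forall>X\<in>G. \<forall>Y\<in>G. \<exists>N n. word_dist H S X Y = ereal (real N) \<and>
      vdistR (sch_act X h) (sch_act Y h) = ereal (real n) \<and> N \<le> K * n \<and> n \<le> C * N"
    using dist_comparison by blast
  define lam where "lam = real (max 1 (max C K))"
  have lam: "1 \<le> lam" "real K \<le> lam" "real C \<le> lam" by (auto simp: lam_def)
  have "ereal (1 / lam) * word_dist H S X Y - ereal 1 \<le> vdistR (sch_act X h) (sch_act Y h) \<and>
     vdistR (sch_act X h) (sch_act Y h) \<le> ereal lam * word_dist H S X Y + ereal 1"
    if XY: "X \<in> G" "Y \<in> G" for X Y
  proof -
    obtain N n where d: "word_dist H S X Y = ereal (real N)"
        "vdistR (sch_act X h) (sch_act Y h) = ereal (real n)" "N \<le> K * n" "n \<le> C * N"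
      using KC XY by blast
    have "real N \<le> real K * real n" using d(3) by (metis of_nat_le_iff of_nat_mult)
    also have "\<dots> \<le> lam * real n" using lam by (intro mult_right_mono) auto
    finally have "real N / lam \<le> real n" using lam by (simp add: divide_le_eq mult.commute)
    moreover have "real n \<le> lam * real N"
    proof -
      have "real n \<le> real C * real N" using d(4) by (metis of_nat_le_iff of_nat_mult)
      also have "\<dots> \<le> lam * real N" using lam by (intro mult_right_mono) auto
      finally show ?thesis .
    qed
    ultimately show ?thesis using d(1,2) by simp
  qed
  thus ?thesis using lam(1) by blast
qed

lemma Rclass_near_orbit:
  "\<exists>M::nat. \<forall>x\<in>R. \<exists>X\<in>G. vdistR x (sch_act X h) \<le> ereal (real M) \<and>
     vdistR (sch_act X h) x \<le> ereal (real M) \<and>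
     (\<forall>a\<in>A. x * a \<in> R \<longrightarrow> vdistR (x * a) (sch_act X h) \<le> ereal (real M))"
proof -
  define P where "P = (\<lambda>q. (q, h)) ` Q \<union> (\<lambda>q. (h, q)) ` Q \<union>
    (\<lambda>(q, a). (q * a, h)) ` {(q, a) \<in> Q \<times> A. q * a \<in> R}"
  have "finite {(q, a) \<in> Q \<times> A. q * a \<in> R}"
    by (rule finite_subset[of _ "Q \<times> A"]) (auto simp: finite_Q finite_A)
  hence "finite P" unfolding P_def using finite_Q by simp
  moreover have "\<forall>p\<in>P. fst p \<in> R \<and> snd p \<in> R"
    unfolding P_def using Q_subset_Rclass h_in_Rclass by auto
  hence "\<forall>p\<in>P. \<exists>n. walkR n (fst p) (snd p)" using walk_exists by blast
  ultimately obtain M where M: "\<forall>p\<in>P. \<exists>n\<le>M. walkR n (fst p) (snd p)"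
    using finite_bounded_witness[of P "\<lambda>n p. walkR n (fst p) (snd p)"] by blast
  have bound: "vdistR (sch_act X x) (sch_act X y) \<le> ereal (real M)"
    if X: "X \<in> G" and xy: "(x, y) \<in> P" for X x y
  proof -
    obtain n where "n \<le> M" "walkR n x y" using M xy by auto
    hence "vdistR (sch_act X x) (sch_act X y) \<le> ereal (real n)"
      using vdist_le_walk walk_sch_act[OF X] by blast
    also have "\<dots> \<le> ereal (real M)" using \<open>n \<le> M\<close> by simp
    finally show ?thesis .
  qed
  have "\<exists>X\<in>G. vdistR x (sch_act X h) \<le> ereal (real M) \<and>
     vdistR (sch_act X h) x \<le> ereal (real M) \<and>
     (\<forall>a\<in>A. x * a \<in> R \<longrightarrow> vdistR (x * a) (sch_act X h) \<le> ereal (real M))" if "x \<in> R" for x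
  proof -
    obtain q X where q: "q \<in> Q" and X: "X \<in> G" and x: "x = sch_act X q"
      using Q_covers_Rclass[OF \<open>x \<in> R\<close>] by blast
    have "vdistR (x * a) (sch_act X h) \<le> ereal (real M)" if "a \<in> A" "x * a \<in> R" for a
    proof -
      have "q * a \<in> R" using sch_act_mult_Rclass[OF X] q Q_subset_Rclass x that(2) by blast
      hence "(q * a, h) \<in> P"
        unfolding P_def using q that(1) by (intro UnI2 image_eqI[of _ _ "(q, a)"]) auto
      moreover have "sch_act X (q * a) = x * a" using x by (simp add: sch_act_def mult.assoc)
      ultimately show ?thesis using bound[OF X, of "q * a" h] by simp
    qed
    moreover have "(q, h) \<in> P" "(h, q) \<in> P" unfolding P_def using q by auto
    ultimately show ?thesis using bound[OF X, of q h] bound[OF X, of h q] x X by auto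
  qed
  thus ?thesis by blast
qed

lemma gpoints_near_orbit:
  "\<exists>\<mu>\<ge>0. \<forall>p\<in>gpoints R E. \<exists>X\<in>G.
     max (gdist E fst edge_tgt p (GV (sch_act X h))) (gdist E fst edge_tgt (GV (sch_act X h)) p)
       \<le> ereal \<mu>"
proof -
  obtain M where M: "\<forall>x\<in>R. \<exists>X\<in>G. vdistR x (sch_act X h) \<le> ereal (real M) \<and>
     vdistR (sch_act X h) x \<le> ereal (real M) \<and>
     (\<forall>a\<in>A. x * a \<in> R \<longrightarrow> vdistR (x * a) (sch_act X h) \<le> ereal (real M))"
    using Rclass_near_orbit by blast
  have "\<exists>X\<in>G. max (gdist E fst edge_tgt p (GV (sch_act X h))) (gdist E fst edge_tgt (GV (sch_act X h)) p)
       \<le> ereal (real M + 1)" if p: "p \<in> gpoints R E" for p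
  proof -
    consider v where "v \<in> R" "p = GV v"
      | e \<mu> where "e \<in> E" "0 < \<mu>" "\<mu> < 1" "p = GE e \<mu>"
      using p unfolding gpoints_def by blast
    thus ?thesis
    proof cases
      case 1
      then obtain X where "X \<in> G" "vdistR v (sch_act X h) \<le> ereal (real M)"
          "vdistR (sch_act X h) v \<le> ereal (real M)"
        using M by blast
      moreover have "ereal (real M) \<le> ereal (real M + 1)" by simp
      ultimately show ?thesis using 1(2) by (intro bexI[of _ X]) (auto intro: order_trans)
    next
      case 2
      then obtain x a where e: "e = (x, a, x * a)" "x \<in> R" "x * a \<in> R" "a \<in> A"
        unfolding sch_edges_def by blast
      then obtain X where X: "X \<in> G" "vdistR (sch_act X h) x \<le> ereal (real M)"
          "vdistR (x * a) (sch_act X h) \<le> ereal (real M)"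
        using M by blast
      have "gdist E fst edge_tgt p (GV (sch_act X h)) = ereal (1 - \<mu>) + vdistR (x * a) (sch_act X h)"
        using 2(4) e(1) by (simp add: edge_tgt_def)
      also have "\<dots> \<le> ereal (1 - \<mu>) + ereal (real M)" using X(3) by (rule add_left_mono)
      also have "\<dots> \<le> ereal (real M + 1)" using 2(2) by simp
      finally have to_orbit: "gdist E fst edge_tgt p (GV (sch_act X h)) \<le> ereal (real M + 1)" .
      have "gdist E fst edge_tgt (GV (sch_act X h)) p = vdistR (sch_act X h) x + ereal \<mu>"
        using 2(4) e(1) by simp
      also have "\<dots> \<le> ereal (real M) + ereal \<mu>" using X(2) by (rule add_right_mono)
      also have "\<dots> \<le> ereal (real M + 1)" using 2(3) by simp
      finally have from_orbit: "gdist E fst edge_tgt (GV (sch_act X h)) p \<le> ereal (real M + 1)" .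
      show ?thesis using to_orbit from_orbit X(1) by auto
    qed
  qed
  thus ?thesis by (intro exI[of _ "real M + 1"]) auto
qed

theorem orbit_map_quasi_isometry:
  "quasi_isometry G (word_dist H S) (gpoints R E) (gdist E fst edge_tgt) (\<lambda>X. GV (sch_act X h))"
proof -
  obtain lam where "1 \<le> lam" and lam: "\<forall>X\<in>G. \<forall>Y\<in>G.
     ereal (1 / lam) * word_dist H S X Y - ereal 1 \<le> vdistR (sch_act X h) (sch_act Y h) \<and>
     vdistR (sch_act X h) (sch_act Y h) \<le> ereal lam * word_dist H S X Y + ereal 1"
    using orbit_map_quasi_isometric by blast
  obtain \<mu> where "0 \<le> \<mu>" and \<mu>: "\<forall>p\<in>gpoints R E. \<exists>X\<in>G.
     max (gdist E fst edge_tgt p (GV (sch_act X h))) (gdist E fst edge_tgt (GV (sch_act X h)) p)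
       \<le> ereal \<mu>"
    using gpoints_near_orbit by blast
  have "(\<lambda>X. GV (sch_act X h)) ` G \<subseteq> gpoints R E"
    unfolding gpoints_def using sch_act_Rclass h_in_Rclass by blast
  thus ?thesis unfolding quasi_isometry_def
    using \<open>1 \<le> lam\<close> lam \<open>0 \<le> \<mu>\<close> \<mu> by (intro conjI exI[of _ lam] exI[of _ 1] exI[of _ \<mu>]) auto
qed

end

theorem theorem5p2:
  fixes A :: "'a::monoid_mult set" and H :: "'a set" and h :: 'a
  assumes "finite A"
    and "\<forall>m::'a. \<exists>ws. set ws \<subseteq> A \<and> m = prod_list ws"
    and "H = Hclass h"
    and "finite (Hclass ` Rclass h)"
  shows "(\<exists>S. finite S \<and> sch_generates H S) \<and>
         (\<forall>S. finite S \<and> sch_generates H S \<longrightarrow>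
            (\<exists>f. quasi_isometry (schgrp H) (word_dist H S)
                   (gpoints (Rclass h) (sch_edges A (Rclass h)))
                   (gdist (sch_edges A (Rclass h)) fst edge_tgt) f))"
proof (intro conjI allI impI)
  interpret finitely_many_Hclasses h A
    using assms(1,2,4) by unfold_locales auto
  show "\<exists>S. finite S \<and> sch_generates H S"
    using finite_Zs sch_generates_Zs assms(3) by blast
  fix S assume "finite S \<and> sch_generates H S"
  then interpret word_metric h A S
    using assms(3) by unfold_locales auto
  show "\<exists>f. quasi_isometry (schgrp H) (word_dist H S) (gpoints (Rclass h) (sch_edges A (Rclass h)))
           (gdist (sch_edges A (Rclass h)) fst edge_tgt) f"
    using orbit_map_quasi_isometry assms(3) by blast
qed

end
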